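(* Let $f:(k+1)^V\to\mathbb{R}_{\ge0}$ be non-negative, monotone and $k$-submodular with all marginal values $\Delta_{e,j}f(S)\in[0,1]$, and let $F$ be its multilinear extension. Let $x\in\mathcal P$, $\mu_0=F(x)$, and let $R=(R_1,\dots,R_k)\in(k+1)^V$ be the random output of randomized swap rounding applied to $x$ (with any decomposition of $\bar x$ into bases). Then $\mathbb{E}[f(R)]\ge\mu_0$, and for every $\delta>0$, $$\Pr[f(R)\le(1-\delta)\mu_0]\le e^{-\mu_0\delta^2/8}.$$
   Context: Let $V=[n]=\{1,\dots,n\}$ and let $k\ge 1$ be an integer. Write $(k+1)^V$ for the set of $k$-tuples $S=(S_1,\dots,S_k)$ of pairwise disjoint subsets of $V$. For $S,T\in(k+1)^V$ let $S\sqcap T=(S_1\cap T_1,\dots,S_k\cap T_k)$ and let $S\sqcup T$ be the tuple whose $j$-th component is $(S_j\cup T_j)\setminus\bigcup_{l\neq j}(S_l\cup T_l)$. A function $f:(k+1)^V\to\mathbb{R}$ is $k$-submodular if $f(S)+f(T)\ge f(S\sqcap T)+f(S\sqcup T)$ for all $S,T\in(k+1)^V$. Write $S\preceq T$ if $S_j\subseteq T_j$ for all $j$; $f$ is monotone if $S\preceq T$ implies $f(S)\le f(T)$. For $e\notin\bigcup_l S_l$ and $j\in[k]$, $\Delta_{e,j}f(S)=f(S_1,\dots,S_{j-1},S_j\cup\{e\},S_{j+1},\dots,S_k)-f(S)$. Let $\mathcal P=\{x\in[0,1]^{n\times k}:\sum_{j=1}^k x_{i,j}\le 1\ \forall i\in[n]\}$.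 The multilinear extension of $f$ is the polynomial $F(x)=\sum_{S\in(k+1)^V} f(S_1,\dots,S_k)\Big(\prod_{j\in[k]}\prod_{i\in S_j}x_{i,j}\Big)\prod_{i\in V\setminus\bigcup_j S_j}\Big(1-\sum_{j=1}^k x_{i,j}\Big)$, considered on $\mathcal P$. Randomized swap rounding: let $E=[n]\times\{0,1,\dots,k\}$ and call $C\subseteq E$ a base if it contains exactly one element of each row $\{i\}\times\{0,\dots,k\}$ (bases of a partition matroid). For $x\in\mathcal P$ let $\bar x\in[0,1]^E$ be given by $\bar x_{i,j}=x_{i,j}$ for $j\ge1$ and $\bar x_{i,0}=1-\sum_{j\ge1}x_{i,j}$. Write $\bar x=\sum_{l=1}^m\beta_l\mathbf 1_{B_l}$ with $\beta_l>0$, $\sum_l\beta_l=1$, $B_l$ bases. Set $C_1=B_1$, $\gamma_1=\beta_1$. For $l=1,\dots,m-1$, merge $C_l$ (weight $\gamma_l$) with $B_{l+1}$ (weight $\beta_{l+1}$): with $C=C_l$, $B=B_{l+1}$, while $C\neq B$ pick a row $i$ where they differ, with $c\in C\setminus B$ and $b\in B\setminus C$ the elements of row $i$; with probability $\gamma_l/(\gamma_l+\beta_{l+1})$ replace $B$ by $B-b+c$, otherwise replace $C$ by $C-c+b$ (the choice of row may depend on the history). When $C=B$, set $C_{l+1}=C$ and $\gamma_{l+1}=\gamma_l+\beta_{l+1}$. The output is $R=(R_1,\dots,R_k)$ with $R_j=\{i:(i,j)\in C_m\}$. *)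

theory Defs
  imports "HOL-Probability.Probability"
begin

text \<open>A k-tuple (S_1,...,S_k) is represented as a function S :: nat => nat set,
  with S j the j-th component for j in {1..k} and S j = {} otherwise.\<close>

definition ktuples :: "nat \<Rightarrow> nat \<Rightarrow> (nat \<Rightarrow> nat set) set" where
  "ktuples n k = {S. (\<forall>j\<in>{1..k}. S j \<subseteq> {1..n})
     \<and> (\<forall>j\<in>{1..k}. \<forall>l\<in>{1..k}. j \<noteq> l \<longrightarrow> S j \<inter> S l = {})
     \<and> (\<forall>j. j \<notin> {1..k} \<longrightarrow> S j = {})}"

definition kmeet :: "(nat \<Rightarrow> nat set) \<Rightarrow> (nat \<Rightarrow> nat set) \<Rightarrow> (nat \<Rightarrow> nat set)" where
  "kmeet S T = (\<lambda>j. S j \<inter> T j)"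

definition kjoin :: "nat \<Rightarrow> (nat \<Rightarrow> nat set) \<Rightarrow> (nat \<Rightarrow> nat set) \<Rightarrow> (nat \<Rightarrow> nat set)" where
  "kjoin k S T = (\<lambda>j. if j \<in> {1..k}
      then (S j \<union> T j) - (\<Union>l\<in>{1..k} - {j}. S l \<union> T l) else {})"

definition k_submodular :: "nat \<Rightarrow> nat \<Rightarrow> ((nat \<Rightarrow> nat set) \<Rightarrow> real) \<Rightarrow> bool" where
  "k_submodular n k f = (\<forall>S\<in>ktuples n k. \<forall>T\<in>ktuples n k.
      f S + f T \<ge> f (kmeet S T) + f (kjoin k S T))"

definition kpreceq :: "nat \<Rightarrow> (nat \<Rightarrow> nat set) \<Rightarrow> (nat \<Rightarrow> nat set) \<Rightarrow> bool" where
  "kpreceq k S T = (\<forall>j\<in>{1..k}. S j \<subseteq> T j)"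

definition k_monotone :: "nat \<Rightarrow> nat \<Rightarrow> ((nat \<Rightarrow> nat set) \<Rightarrow> real) \<Rightarrow> bool" where
  "k_monotone n k f = (\<forall>S\<in>ktuples n k. \<forall>T\<in>ktuples n k. kpreceq k S T \<longrightarrow> f S \<le> f T)"

definition marginal :: "((nat \<Rightarrow> nat set) \<Rightarrow> real) \<Rightarrow> nat \<Rightarrow> nat \<Rightarrow> (nat \<Rightarrow> nat set) \<Rightarrow> real" where
  "marginal f e j S = f (S(j := insert e (S j))) - f S"

definition polytopeP :: "nat \<Rightarrow> nat \<Rightarrow> (nat \<Rightarrow> nat \<Rightarrow> real) \<Rightarrow> bool" where
  "polytopeP n k x = ((\<forall>i\<in>{1..n}. \<forall>j\<in>{1..k}. 0 \<le> x i j \<and> x i j \<le> 1)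
      \<and> (\<forall>i\<in>{1..n}. (\<Sum>j\<in>{1..k}. x i j) \<le> 1))"

definition multilinear_ext ::
  "nat \<Rightarrow> nat \<Rightarrow> ((nat \<Rightarrow> nat set) \<Rightarrow> real) \<Rightarrow> (nat \<Rightarrow> nat \<Rightarrow> real) \<Rightarrow> real" where
  "multilinear_ext n k f x = (\<Sum>S\<in>ktuples n k. f S
      * (\<Prod>j\<in>{1..k}. \<Prod>i\<in>S j. x i j)
      * (\<Prod>i\<in>{1..n} - (\<Union>j\<in>{1..k}. S j). 1 - (\<Sum>j\<in>{1..k}. x i j)))"

definition is_base :: "nat \<Rightarrow> nat \<Rightarrow> (nat \<times> nat) set \<Rightarrow> bool" where
  "is_base n k C = (C \<subseteq> {1..n} \<times> {0..k} \<and> (\<forall>i\<in>{1..n}. \<exists>!j. (i, j) \<in> C))"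

definition xbar :: "nat \<Rightarrow> (nat \<Rightarrow> nat \<Rightarrow> real) \<Rightarrow> nat \<Rightarrow> nat \<Rightarrow> real" where
  "xbar k x i j = (if j = 0 then 1 - (\<Sum>l\<in>{1..k}. x i l) else x i j)"

definition is_decomposition ::
  "nat \<Rightarrow> nat \<Rightarrow> (nat \<Rightarrow> nat \<Rightarrow> real) \<Rightarrow> (real \<times> (nat \<times> nat) set) list \<Rightarrow> bool" where
  "is_decomposition n k x D = ((\<forall>(\<beta>, B)\<in>set D. \<beta> > 0 \<and> is_base n k B)
      \<and> (\<Sum>l<length D. fst (D ! l)) = 1
      \<and> (\<forall>i\<in>{1..n}. \<forall>j\<in>{0..k}.
           xbar k x i j = (\<Sum>l<length D. fst (D ! l) * (if (i, j) \<in> snd (D ! l) then 1 else 0))))"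

text \<open>Randomized swap rounding with an arbitrary, history-dependent choice of rows.
  swap_round n gamma C L p means: p is a possible output distribution of the process
  started in the state where the accumulated base is C with weight gamma and L is the
  list of remaining (weight, base) pairs, whose head is the base currently being merged
  (possibly already modified by earlier swaps of this merge). Each derivation corresponds
  to a (deterministic) adaptive strategy for choosing rows depending on the full history.\<close>
inductive swap_round ::
  "nat \<Rightarrow> real \<Rightarrow> (nat \<times> nat) set \<Rightarrow> (real \<times> (nat \<times> nat) set) list
     \<Rightarrow> (nat \<times> nat) set pmf \<Rightarrow> bool" for n where
  finish: "swap_round n \<gamma> C [] (return_pmf C)"
| merged: "swap_round n (\<gamma> + \<beta>) C L p \<Longrightarrow> swap_round n \<gamma> C ((\<beta>, C) # L) p"
| swap: "\<lbrakk> C \<noteq> B; i \<in> {1..n}; c \<in> C - B; b \<in> B - C; fst c = i; fst b = i;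
          swap_round n \<gamma> C ((\<beta>, insert c (B - {b})) # L) p1;
          swap_round n \<gamma> (insert b (C - {c})) ((\<beta>, B) # L) p2 \<rbrakk>
        \<Longrightarrow> swap_round n \<gamma> C ((\<beta>, B) # L)
              (bind_pmf (bernoulli_pmf (\<gamma> / (\<gamma> + \<beta>))) (\<lambda>h. if h then p1 else p2))"

definition base_to_tuple :: "nat \<Rightarrow> (nat \<times> nat) set \<Rightarrow> (nat \<Rightarrow> nat set)" where
  "base_to_tuple k C = (\<lambda>j. if j \<in> {1..k} then {i. (i, j) \<in> C} else {})"

end

theory Submission
  imports Defs
begin

text \<open>Each swap moves the current fractional point \<open>y = \<gamma> \<one>\<^sub>C + \<Sum> \<beta>\<^sub>l \<one>\<^sub>B\<^sub>l\<close> along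
  \<open>\<one>\<^sub>c - \<one>\<^sub>b\<close> for two elements \<open>c, b\<close> of the same row, with zero expected displacement. The
  multilinear extension of any function of a base is affine in each row, so its value at \<open>y\<close> is a
  martingale, and the output of swap rounding on a partition matroid has exactly the distribution
  in which the rows choose their columns independently according to \<open>xbar k x\<close>. In particular
  \<open>E[f(R)] = F(x)\<close>. For independent choices, \<open>k\<close>-submodularity makes the marginal gains of \<open>f\<close>,
  which lie in \<open>[0, 1]\<close>, shrink as more rows are fixed; a row-by-row induction then bounds
  \<open>E[exp (-\<delta> f(R))]\<close> as for a sum of independent \<open>[0, 1]\<close>-valued variables with mean \<open>F(x)\<close>, and
  Markov's inequality together with \<open>exp (-\<delta>) \<le> 1 - \<delta> + \<delta>\<^sup>2 / 2\<close> gives the lower tail.\<close>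

section \<open>Independent choices of one column per row\<close>

definition assignments :: "nat \<Rightarrow> nat set \<Rightarrow> (nat \<Rightarrow> nat) set" where
  "assignments k I = {\<sigma>. \<forall>i. (i \<in> I \<longrightarrow> \<sigma> i \<le> k) \<and> (i \<notin> I \<longrightarrow> \<sigma> i = 0)}"

text \<open>If every row \<open>w i\<close> is a probability vector on \<open>{0..k}\<close>, then \<open>mlsum k I w \<phi>\<close> is the
  expectation of \<open>\<phi>\<close> when the rows \<open>i \<in> I\<close> choose \<open>\<sigma> i\<close> independently according to \<open>w i\<close>;
  as a polynomial in \<open>w\<close> it is affine in each row.\<close>

definition mlsum :: "nat \<Rightarrow> nat set \<Rightarrow> (nat \<Rightarrow> nat \<Rightarrow> real) \<Rightarrow> ((nat \<Rightarrow> nat) \<Rightarrow> real) \<Rightarrow> real" where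
  "mlsum k I w \<phi> = (\<Sum>\<sigma>\<in>assignments k I. \<phi> \<sigma> * (\<Prod>i\<in>I. w i (\<sigma> i)))"

lemma assignments_le: "\<sigma> \<in> assignments k I \<Longrightarrow> \<sigma> i \<le> k"
  unfolding assignments_def by (cases "i \<in> I") auto

lemma assignments_empty: "assignments k {} = {\<lambda>_. 0}"
  unfolding assignments_def by auto

lemma assignments_insert:
  assumes "i \<notin> I"
  shows "assignments k (insert i I) = (\<lambda>(j, \<tau>). \<tau>(i := j)) ` ({..k} \<times> assignments k I)"
proof
  show "assignments k (insert i I) \<subseteq> (\<lambda>(j, \<tau>). \<tau>(i := j)) ` ({..k} \<times> assignments k I)"
  proof
    fix \<sigma> assume \<sigma>: "\<sigma> \<in> assignments k (insert i I)"
    have "\<sigma> = (\<lambda>(j, \<tau>). \<tau>(i := j)) (\<sigma> i, \<sigma>(i := 0))" by auto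
    moreover have "(\<sigma> i, \<sigma>(i := 0)) \<in> {..k} \<times> assignments k I"
      using \<sigma> assms unfolding assignments_def by auto
    ultimately show "\<sigma> \<in> (\<lambda>(j, \<tau>). \<tau>(i := j)) ` ({..k} \<times> assignments k I)" by blast
  qed
qed (use assms in \<open>auto simp: assignments_def\<close>)

lemma inj_on_fun_upd_assignments:
  assumes "i \<notin> I"
  shows "inj_on (\<lambda>(j, \<tau>). \<tau>(i := j)) ({..k} \<times> assignments k I)"
proof (rule inj_onI, clarify)
  fix j \<tau> j' \<tau>'
  assume \<tau>: "\<tau> \<in> assignments k I" "\<tau>' \<in> assignments k I" and eq: "\<tau>(i := j) = \<tau>'(i := j')"
  have "\<tau> i = \<tau>' i" using \<tau> assms unfolding assignments_def by auto
  with eq show "j = j' \<and> \<tau> = \<tau>'" by (metis fun_upd_same fun_upd_triv fun_upd_upd)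
qed

lemma finite_assignments: "finite I \<Longrightarrow> finite (assignments k I)"
  by (induction I rule: finite_induct) (simp_all add: assignments_empty assignments_insert)

lemma mlsum_empty: "mlsum k {} w \<phi> = \<phi> (\<lambda>_. 0)"
  unfolding mlsum_def assignments_empty by simp

lemma mlsum_insert:
  assumes "finite I" "i \<notin> I"
  shows "mlsum k (insert i I) w \<phi> = (\<Sum>j\<le>k. w i j * mlsum k I w (\<lambda>\<tau>. \<phi> (\<tau>(i := j))))"
proof -
  have prod_upd: "(\<Prod>l\<in>insert i I. w l ((\<tau>(i := j)) l)) = w i j * (\<Prod>l\<in>I. w l (\<tau> l))" for j \<tau>
  proof -
    have "(\<Prod>l\<in>I. w l ((\<tau>(i := j)) l)) = (\<Prod>l\<in>I. w l (\<tau> l))"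
      using assms(2) by (intro prod.cong) auto
    then show ?thesis using assms by simp
  qed
  have "mlsum k (insert i I) w \<phi>
      = (\<Sum>(j, \<tau>)\<in>{..k} \<times> assignments k I. \<phi> (\<tau>(i := j)) * (\<Prod>l\<in>insert i I. w l ((\<tau>(i := j)) l)))"
    unfolding mlsum_def assignments_insert[OF assms(2)]
    by (subst sum.reindex[OF inj_on_fun_upd_assignments[OF assms(2)]]) (simp add: case_prod_beta)
  also have "\<dots> = (\<Sum>j\<le>k. w i j * mlsum k I w (\<lambda>\<tau>. \<phi> (\<tau>(i := j))))"
    unfolding sum.cartesian_product[symmetric] mlsum_def prod_upd
    by (simp add: sum_distrib_left mult_ac)
  finally show ?thesis .
qed

lemma mlsum_override_insert:
  assumes "finite I" "i \<notin> I"
  shows "mlsum k (insert i I) w (\<lambda>\<tau>. \<phi> (override_on \<rho> \<tau> (insert i I)))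
    = (\<Sum>j\<le>k. w i j * mlsum k I w (\<lambda>\<tau>. \<phi> (override_on (\<rho>(i := j)) \<tau> I)))"
proof -
  have "override_on (\<rho>(i := j)) (\<tau>(i := j)) I = override_on (\<rho>(i := j)) \<tau> I" for \<tau> j
    using assms(2) by (auto simp: override_on_def)
  then show ?thesis using assms by (simp add: mlsum_insert override_on_insert')
qed

lemma mlsum_mono:
  assumes "\<And>\<sigma>. \<sigma> \<in> assignments k I \<Longrightarrow> \<phi> \<sigma> \<le> \<psi> \<sigma>" "\<And>i j. i \<in> I \<Longrightarrow> j \<le> k \<Longrightarrow> 0 \<le> w i j"
  shows "mlsum k I w \<phi> \<le> mlsum k I w \<psi>"
  unfolding mlsum_def
proof (rule sum_mono)
  fix \<sigma> assume \<sigma>: "\<sigma> \<in> assignments k I"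
  have "0 \<le> (\<Prod>i\<in>I. w i (\<sigma> i))"
    using \<sigma> assms(2) unfolding assignments_def by (intro prod_nonneg) auto
  with assms(1)[OF \<sigma>] show "\<phi> \<sigma> * (\<Prod>i\<in>I. w i (\<sigma> i)) \<le> \<psi> \<sigma> * (\<Prod>i\<in>I. w i (\<sigma> i))"
    by (rule mult_right_mono)
qed

lemma mlsum_diff: "mlsum k I w (\<lambda>\<sigma>. \<phi> \<sigma> - \<psi> \<sigma>) = mlsum k I w \<phi> - mlsum k I w \<psi>"
  unfolding mlsum_def by (simp add: left_diff_distrib sum_subtractf)

lemma mlsum_cmult: "mlsum k I w (\<lambda>\<sigma>. c * \<phi> \<sigma>) = c * mlsum k I w \<phi>"
  unfolding mlsum_def by (simp add: sum_distrib_left mult_ac)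

lemma mlsum_cong: "(\<And>\<sigma>. \<sigma> \<in> assignments k I \<Longrightarrow> \<phi> \<sigma> = \<psi> \<sigma>) \<Longrightarrow> mlsum k I w \<phi> = mlsum k I w \<psi>"
  unfolding mlsum_def by (intro sum.cong) auto

lemma mlsum_cong_weights:
  "(\<And>i j. i \<in> I \<Longrightarrow> j \<le> k \<Longrightarrow> w i j = w' i j) \<Longrightarrow> mlsum k I w \<phi> = mlsum k I w' \<phi>"
  unfolding mlsum_def assignments_def by (intro sum.cong refl arg_cong2[where f = "(*)"] prod.cong) auto

lemma mlsum_const:
  assumes "finite I" "\<And>i. i \<in> I \<Longrightarrow> (\<Sum>j\<le>k. w i j) = 1"
  shows "mlsum k I w (\<lambda>_. c) = c"
  using assms by (induction I rule: finite_induct) (simp_all add: mlsum_empty mlsum_insert flip: sum_distrib_right)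

lemma mlsum_point_mass:
  assumes "finite I" "s \<in> assignments k I" "\<And>i j. i \<in> I \<Longrightarrow> w i j = of_bool (j = s i)"
  shows "mlsum k I w \<phi> = \<phi> s"
proof -
  have "(\<Prod>i\<in>I. w i (\<sigma> i)) = of_bool (\<sigma> = s)" if "\<sigma> \<in> assignments k I" for \<sigma>
  proof (cases "\<sigma> = s")
    case False
    then obtain i where "\<sigma> i \<noteq> s i" by auto
    moreover have "i \<in> I"
    proof (rule ccontr)
      assume "i \<notin> I"
      then have "\<sigma> i = 0" "s i = 0" using that assms(2) unfolding assignments_def by auto
      with \<open>\<sigma> i \<noteq> s i\<close> show False by simp
    qed
    ultimately have "(\<Prod>i\<in>I. w i (\<sigma> i)) = 0"
      using assms(1,3) by (intro prod_zero bexI[of _ i]) auto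
    with False show ?thesis by simp
  qed (use assms(3) in simp)
  then have "mlsum k I w \<phi> = (\<Sum>\<sigma>\<in>assignments k I. if \<sigma> = s then \<phi> \<sigma> else 0)"
    unfolding mlsum_def by (intro sum.cong) auto
  also have "\<dots> = \<phi> s" using assms(2) by (simp add: sum.delta[OF finite_assignments[OF assms(1)]])
  finally show ?thesis .
qed

lemma mlsum_row_affine:
  assumes "finite U" "i \<in> U" "\<And>a j. a \<noteq> i \<Longrightarrow> v a j = 0"
  shows "mlsum k U (\<lambda>a j. w a j + t * v a j) \<phi>
       = mlsum k U w \<phi> + t * (\<Sum>\<sigma>\<in>assignments k U. \<phi> \<sigma> * v i (\<sigma> i) * (\<Prod>l\<in>U - {i}. w l (\<sigma> l)))"
proof -
  have "(\<Prod>l\<in>U - {i}. w l (\<sigma> l) + t * v l (\<sigma> l)) = (\<Prod>l\<in>U - {i}. w l (\<sigma> l))" for \<sigma>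
    using assms(3) by (intro prod.cong) auto
  then have "(\<Prod>l\<in>U. w l (\<sigma> l) + t * v l (\<sigma> l))
      = (w i (\<sigma> i) + t * v i (\<sigma> i)) * (\<Prod>l\<in>U - {i}. w l (\<sigma> l))" for \<sigma>
    by (simp add: prod.remove[OF assms(1,2)])
  then show ?thesis
    unfolding mlsum_def prod.remove[OF assms(1,2)]
    by (simp add: distrib_left distrib_right sum.distrib sum_distrib_left mult_ac)
qed

section \<open>A lower-tail bound for diminishing-returns functions of independent choices\<close>

lemma exp_neg_le_chord:
  fixes \<theta> t :: real
  assumes "0 \<le> t" "t \<le> 1"
  shows "exp (- \<theta> * t) \<le> 1 + (exp (- \<theta>) - 1) * t"
proof -
  have "exp ((1 - t) *\<^sub>R 0 + t *\<^sub>R (- \<theta>)) \<le> (1 - t) * exp 0 + t * exp (- \<theta>)"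
    by (rule convex_onD[OF exp_convex]) (use assms in auto)
  then show ?thesis by (simp add: algebra_simps)
qed

lemma exp_neg_le_quadratic:
  fixes x :: real
  assumes "0 \<le> x"
  shows "exp (- x) \<le> 1 - x + x\<^sup>2 / 2"
proof -
  let ?g = "\<lambda>x::real. 1 - x + x\<^sup>2 / 2 - exp (- x)"
  have "?g 0 \<le> ?g x"
  proof (rule DERIV_nonneg_imp_nondecreasing[OF assms])
    fix y :: real
    have "DERIV ?g y :> (- 1 + y + exp (- y))"
      by (rule derivative_eq_intros refl | simp)+
    moreover have "0 \<le> - 1 + y + exp (- y)" using exp_ge_add_one_self[of "- y"] by simp
    ultimately show "\<exists>d. DERIV ?g y :> d \<and> 0 \<le> d" by blast
  qed
  then show ?thesis by simp
qed

lemma tail_exponent_le: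
  fixes \<delta> \<mu> c :: real
  assumes "0 < \<delta>" "0 \<le> \<mu>" "0 \<le> c"
  shows "\<delta> * ((1 - \<delta>) * \<mu>) - \<delta> * c + (exp (- \<delta>) - 1) * (\<mu> - c) \<le> - \<mu> * \<delta>\<^sup>2 / 8"
proof -
  have "(exp (- \<delta>) - 1) * \<mu> \<le> (- \<delta> + \<delta>\<^sup>2 / 2) * \<mu>"
    using exp_neg_le_quadratic[of \<delta>] assms by (intro mult_right_mono) auto
  moreover have "0 \<le> (\<delta> + (exp (- \<delta>) - 1)) * c" using exp_ge_add_one_self[of "- \<delta>"] assms(3) by simp
  moreover have "0 \<le> \<delta>\<^sup>2 * \<mu>" using assms(2) by simp
  ultimately show ?thesis by (simp add: algebra_simps power2_eq_square)
qed

text \<open>One row of the moment-generating-function bound: \<open>d j\<close> is the gain of choosing column \<open>j\<close>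
  now and \<open>e j\<close> the part of that gain lost later, by diminishing returns.\<close>

lemma weighted_exp_sum_le:
  fixes \<theta> B :: real and w d e :: "nat \<Rightarrow> real"
  assumes "finite J" "\<And>j. j \<in> J \<Longrightarrow> 0 \<le> w j" "(\<Sum>j\<in>J. w j) = 1"
    and "\<And>j. j \<in> J \<Longrightarrow> 0 \<le> e j \<and> e j \<le> d j \<and> d j \<le> 1" "0 \<le> \<theta>"
  shows "(\<Sum>j\<in>J. w j * exp (B - \<theta> * d j - (exp (- \<theta>) - 1) * e j))
      \<le> exp (B + (exp (- \<theta>) - 1) * (\<Sum>j\<in>J. w j * (d j - e j)))"
proof -
  let ?a = "exp (- \<theta>) - 1"
  have a: "0 \<le> \<theta> + ?a" using exp_ge_add_one_self[of "- \<theta>"] by simp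
  have pointwise: "exp (- \<theta> * d j - ?a * e j) \<le> 1 + ?a * (d j - e j)" if "j \<in> J" for j
  proof -
    have "- \<theta> * d j - ?a * e j \<le> - \<theta> * (d j - e j)"
      using assms(4)[OF that] mult_nonneg_nonneg[OF a, of "e j"] by (simp add: algebra_simps)
    then have "exp (- \<theta> * d j - ?a * e j) \<le> exp (- \<theta> * (d j - e j))" by simp
    also have "\<dots> \<le> 1 + ?a * (d j - e j)" by (rule exp_neg_le_chord) (use assms(4)[OF that] in auto)
    finally show ?thesis .
  qed
  have "exp (B - \<theta> * d j - ?a * e j) = exp B * exp (- \<theta> * d j - ?a * e j)" for j
    by (simp flip: exp_add)
  then have "(\<Sum>j\<in>J. w j * exp (B - \<theta> * d j - ?a * e j)) = exp B * (\<Sum>j\<in>J. w j * exp (- \<theta> * d j - ?a * e j))"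
    by (simp add: sum_distrib_left mult_ac)
  also have "\<dots> \<le> exp B * (\<Sum>j\<in>J. w j * (1 + ?a * (d j - e j)))"
    using assms(2) pointwise by (intro mult_left_mono sum_mono) auto
  also have "(\<Sum>j\<in>J. w j * (1 + ?a * (d j - e j))) = 1 + ?a * (\<Sum>j\<in>J. w j * (d j - e j))"
    using assms(3) by (simp add: distrib_left sum.distrib sum_distrib_left mult_ac)
  also have "exp B * \<dots> \<le> exp B * exp (?a * (\<Sum>j\<in>J. w j * (d j - e j)))"
    by (intro mult_left_mono exp_ge_add_one_self) auto
  finally show ?thesis by (simp add: exp_add)
qed

text \<open>An assignment puts row \<open>i\<close> into the set \<open>\<sigma> i \<in> {1..k}\<close>, or into none if \<open>\<sigma> i = 0\<close>;
  \<open>\<forall>l. \<sigma> l \<noteq> 0 \<longrightarrow> \<tau> l = \<sigma> l\<close> says that \<open>\<tau>\<close> extends \<open>\<sigma>\<close>.\<close>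

locale bounded_dr_product =
  fixes k :: nat and U :: "nat set" and w :: "nat \<Rightarrow> nat \<Rightarrow> real" and h :: "(nat \<Rightarrow> nat) \<Rightarrow> real"
  assumes finite_U: "finite U"
    and weights_nonneg: "\<And>i j. i \<in> U \<Longrightarrow> j \<le> k \<Longrightarrow> 0 \<le> w i j"
    and weights_sum: "\<And>i. i \<in> U \<Longrightarrow> (\<Sum>j\<le>k. w i j) = 1"
    and marginal_bounded: "\<And>\<sigma> i j. \<sigma> \<in> assignments k U \<Longrightarrow> i \<in> U \<Longrightarrow> j \<in> {1..k} \<Longrightarrow> \<sigma> i = 0 \<Longrightarrow>
          0 \<le> h (\<sigma>(i := j)) - h \<sigma> \<and> h (\<sigma>(i := j)) - h \<sigma> \<le> 1"
    and diminishing_returns: "\<And>\<sigma> \<tau> i j. \<sigma> \<in> assignments k U \<Longrightarrow> \<tau> \<in> assignments k U \<Longrightarrow>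
          (\<forall>l. \<sigma> l \<noteq> 0 \<longrightarrow> \<tau> l = \<sigma> l) \<Longrightarrow> i \<in> U \<Longrightarrow> \<tau> i = 0 \<Longrightarrow> j \<in> {1..k} \<Longrightarrow>
          h (\<tau>(i := j)) - h \<tau> \<le> h (\<sigma>(i := j)) - h \<sigma>"
begin

lemma override_on_assignments:
  "\<tau> \<in> assignments k I \<Longrightarrow> \<rho> \<in> assignments k U \<Longrightarrow> I \<subseteq> U \<Longrightarrow> override_on \<rho> \<tau> I \<in> assignments k U"
  unfolding assignments_def override_on_def by auto

lemma mlsum_override_gain_bounds:
  assumes "I \<subseteq> U" "i \<in> U - I" "\<rho> \<in> assignments k U" "\<forall>l\<in>insert i I. \<rho> l = 0" "j \<in> {1..k}"
  defines "G \<equiv> mlsum k I w (\<lambda>\<tau>. h (override_on (\<rho>(i := j)) \<tau> I)) - mlsum k I w (\<lambda>\<tau>. h (override_on \<rho> \<tau> I))"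
  shows "0 \<le> G" and "G \<le> h (\<rho>(i := j)) - h \<rho>"
proof -
  have finite_I: "finite I" using assms(1) finite_U finite_subset by blast
  have w_I: "\<And>i j. i \<in> I \<Longrightarrow> j \<le> k \<Longrightarrow> 0 \<le> w i j" "\<And>i. i \<in> I \<Longrightarrow> (\<Sum>j\<le>k. w i j) = 1"
    using weights_nonneg weights_sum assms(1) by auto
  have upd: "override_on (\<rho>(i := j)) \<tau> I = (override_on \<rho> \<tau> I)(i := j)" for \<tau>
    using assms(2) by (auto simp: override_on_def)
  have G: "G = mlsum k I w (\<lambda>\<tau>. h ((override_on \<rho> \<tau> I)(i := j)) - h (override_on \<rho> \<tau> I))"
    unfolding G_def upd mlsum_diff ..
  have free_i: "override_on \<rho> \<tau> I i = 0" for \<tau> using assms(2,4) by simp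
  have "mlsum k I w (\<lambda>\<tau>. 0) \<le> G"
    unfolding G using marginal_bounded[OF override_on_assignments[OF _ assms(3,1)] _ assms(5) free_i] assms(2)
    by (intro mlsum_mono w_I) auto
  then show "0 \<le> G" using mlsum_const[OF finite_I w_I(2)] by simp
  have "G \<le> mlsum k I w (\<lambda>\<tau>. h (\<rho>(i := j)) - h \<rho>)"
    unfolding G
  proof (intro mlsum_mono w_I)
    fix \<tau> assume "\<tau> \<in> assignments k I"
    moreover have "\<forall>l. \<rho> l \<noteq> 0 \<longrightarrow> override_on \<rho> \<tau> I l = \<rho> l" using assms(4) by (simp add: override_on_def)
    ultimately show "h ((override_on \<rho> \<tau> I)(i := j)) - h (override_on \<rho> \<tau> I) \<le> h (\<rho>(i := j)) - h \<rho>"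
      using assms by (intro diminishing_returns override_on_assignments free_i) auto
  qed
  then show "G \<le> h (\<rho>(i := j)) - h \<rho>" using mlsum_const[OF finite_I w_I(2)] by simp
qed

text \<open>The moment generating function of \<open>-h\<close>, for the rows in \<open>I\<close> chosen at random and the
  others fixed by \<open>\<rho>\<close>, is at most that of a sum of independent \<open>[0, 1]\<close>-valued variables
  with the same mean.\<close>

lemma mgf_override_le:
  assumes "0 \<le> \<theta>"
  shows "I \<subseteq> U \<Longrightarrow> \<rho> \<in> assignments k U \<Longrightarrow> \<forall>i\<in>I. \<rho> i = 0 \<Longrightarrow>
    mlsum k I w (\<lambda>\<tau>. exp (- \<theta> * h (override_on \<rho> \<tau> I)))
      \<le> exp (- \<theta> * h \<rho> + (exp (- \<theta>) - 1) * (mlsum k I w (\<lambda>\<tau>. h (override_on \<rho> \<tau> I)) - h \<rho>))"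
proof (induction I arbitrary: \<rho> rule: infinite_finite_induct)
  case (infinite I)
  then show ?case using finite_subset[OF _ finite_U] by blast
next
  case empty
  then show ?case by (simp add: mlsum_empty)
next
  case (insert i I)
  let ?a = "exp (- \<theta>) - 1"
  define H where "H j = mlsum k I w (\<lambda>\<tau>. h (override_on (\<rho>(i := j)) \<tau> I))" for j
  define d where "d j = h (\<rho>(i := j)) - h \<rho>" for j
  define e where "e j = d j - (H j - H 0)" for j
  have i: "i \<in> U - I" "\<rho> i = 0" using insert by auto
  have \<rho>0: "\<rho>(i := 0) = \<rho>" using i by auto
  have row: "\<And>j. j \<le> k \<Longrightarrow> 0 \<le> w i j" "(\<Sum>j\<le>k. w i j) = 1"
    using weights_nonneg weights_sum i by auto
  have ed: "0 \<le> e j \<and> e j \<le> d j \<and> d j \<le> 1" if "j \<le> k" for j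
  proof (cases "j = 0")
    case False
    then have "j \<in> {1..k}" using that by auto
    with mlsum_override_gain_bounds[of I i \<rho> j] marginal_bounded[of \<rho> i j] insert.prems i
    show ?thesis unfolding e_def d_def H_def by (simp add: \<rho>0 override_on_insert')
  qed (simp add: d_def e_def \<rho>0)
  have step: "mlsum k I w (\<lambda>\<tau>. exp (- \<theta> * h (override_on (\<rho>(i := j)) \<tau> I)))
      \<le> exp (- \<theta> * h \<rho> + ?a * (H 0 - h \<rho>) - \<theta> * d j - ?a * e j)" if "j \<le> k" for j
  proof -
    have "\<rho>(i := j) \<in> assignments k U" using insert.prems(2) i that unfolding assignments_def by auto
    moreover have "\<forall>l\<in>I. (\<rho>(i := j)) l = 0" using insert.prems(3) insert.hyps(2) by auto
    ultimately have "mlsum k I w (\<lambda>\<tau>. exp (- \<theta> * h (override_on (\<rho>(i := j)) \<tau> I)))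
        \<le> exp (- \<theta> * h (\<rho>(i := j)) + ?a * (H j - h (\<rho>(i := j))))"
      using insert.IH insert.prems(1) unfolding H_def by simp
    also have "\<dots> = exp (- \<theta> * h \<rho> + ?a * (H 0 - h \<rho>) - \<theta> * d j - ?a * e j)"
      unfolding d_def e_def by (simp add: algebra_simps)
    finally show ?thesis .
  qed
  have "(\<Sum>j\<le>k. w i j * (d j - e j)) = (\<Sum>j\<le>k. w i j * H j) - H 0"
    using row(2) by (simp add: e_def right_diff_distrib sum_subtractf flip: sum_distrib_right)
  then have mean: "mlsum k (insert i I) w (\<lambda>\<tau>. h (override_on \<rho> \<tau> (insert i I)))
      = H 0 + (\<Sum>j\<le>k. w i j * (d j - e j))"
    unfolding mlsum_override_insert[OF \<open>finite I\<close> insert.hyps(2)] H_def by simp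
  have "mlsum k (insert i I) w (\<lambda>\<tau>. exp (- \<theta> * h (override_on \<rho> \<tau> (insert i I))))
      = (\<Sum>j\<le>k. w i j * mlsum k I w (\<lambda>\<tau>. exp (- \<theta> * h (override_on (\<rho>(i := j)) \<tau> I))))"
    by (rule mlsum_override_insert[OF \<open>finite I\<close> insert.hyps(2)])
  also have "\<dots> \<le> (\<Sum>j\<le>k. w i j * exp (- \<theta> * h \<rho> + ?a * (H 0 - h \<rho>) - \<theta> * d j - ?a * e j))"
    using step row by (intro sum_mono mult_left_mono) auto
  also have "\<dots> \<le> exp (- \<theta> * h \<rho> + ?a * (H 0 - h \<rho>) + ?a * (\<Sum>j\<le>k. w i j * (d j - e j)))"
    using weighted_exp_sum_le[of "{..k}" "w i" e d \<theta>] row ed assms by auto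
  finally show ?case unfolding mean by (simp add: algebra_simps)
qed

lemma mgf_le:
  assumes "0 \<le> \<theta>"
  shows "mlsum k U w (\<lambda>\<sigma>. exp (- \<theta> * h \<sigma>))
    \<le> exp (- \<theta> * h (\<lambda>_. 0) + (exp (- \<theta>) - 1) * (mlsum k U w h - h (\<lambda>_. 0)))"
proof -
  have zero: "(\<lambda>_. 0) \<in> assignments k U" unfolding assignments_def by auto
  have "override_on (\<lambda>_. 0) \<tau> U = \<tau>" if "\<tau> \<in> assignments k U" for \<tau>
    using that unfolding assignments_def override_on_def by auto
  then have "mlsum k U w (\<lambda>\<tau>. \<phi> (override_on (\<lambda>_. 0) \<tau> U)) = mlsum k U w \<phi>" for \<phi>
    by (intro mlsum_cong) simp
  note override_zero = this[of "\<lambda>\<sigma>. exp (- \<theta> * h \<sigma>)"] this[of h]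
  show ?thesis using mgf_override_le[OF assms, of U "\<lambda>_. 0"] zero unfolding override_zero by simp
qed

lemma lower_tail:
  assumes nonneg: "\<And>\<sigma>. \<sigma> \<in> assignments k U \<Longrightarrow> 0 \<le> h \<sigma>" and "0 < \<delta>"
  defines "\<mu> \<equiv> mlsum k U w h"
  shows "mlsum k U w (\<lambda>\<sigma>. of_bool (h \<sigma> \<le> (1 - \<delta>) * \<mu>)) \<le> exp (- \<mu> * \<delta>\<^sup>2 / 8)"
proof -
  let ?t = "(1 - \<delta>) * \<mu>" and ?h0 = "h (\<lambda>_. 0)"
  have "mlsum k U w (\<lambda>\<sigma>. of_bool (h \<sigma> \<le> ?t)) \<le> mlsum k U w (\<lambda>\<sigma>. exp (\<delta> * ?t) * exp (- \<delta> * h \<sigma>))"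
  proof (intro mlsum_mono weights_nonneg)
    fix \<sigma>
    have "of_bool (h \<sigma> \<le> ?t) \<le> exp (\<delta> * (?t - h \<sigma>))"
      using \<open>0 < \<delta>\<close> by (auto simp: one_le_exp_iff)
    then show "of_bool (h \<sigma> \<le> ?t) \<le> exp (\<delta> * ?t) * exp (- \<delta> * h \<sigma>)"
      by (simp add: right_diff_distrib flip: exp_add)
  qed
  also have "\<dots> \<le> exp (\<delta> * ?t) * exp (- \<delta> * ?h0 + (exp (- \<delta>) - 1) * (\<mu> - ?h0))"
    unfolding mlsum_cmult \<mu>_def using mgf_le \<open>0 < \<delta>\<close> by simp
  also have "\<dots> \<le> exp (- \<mu> * \<delta>\<^sup>2 / 8)"
  proof -
    have "mlsum k U w (\<lambda>_. 0) \<le> \<mu>" unfolding \<mu>_def by (intro mlsum_mono nonneg weights_nonneg)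
    then have "0 \<le> \<mu>" by (simp add: mlsum_const[OF finite_U weights_sum])
    moreover have "0 \<le> ?h0" using nonneg unfolding assignments_def by simp
    ultimately have "\<delta> * ?t + (- \<delta> * ?h0 + (exp (- \<delta>) - 1) * (\<mu> - ?h0)) \<le> - \<mu> * \<delta>\<^sup>2 / 8"
      using tail_exponent_le[OF \<open>0 < \<delta>\<close>] by fastforce
    then show ?thesis by (simp flip: exp_add)
  qed
  finally show ?thesis .
qed

end

section \<open>Swap rounding on the partition matroid outputs the product distribution\<close>

definition base_of :: "nat set \<Rightarrow> (nat \<Rightarrow> nat) \<Rightarrow> (nat \<times> nat) set" where
  "base_of U \<sigma> = (\<lambda>i. (i, \<sigma> i)) ` U"

lemma finite_bases: "finite {C. is_base n k C}"
  by (rule finite_subset[of _ "Pow ({1..n} \<times> {0..k})"]) (auto simp: is_base_def)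

lemma is_base_exchange:
  assumes "is_base n k B" "is_base n k C" "c \<in> C - B" "b \<in> B - C" "fst c = fst b"
  shows "is_base n k (insert c (B - {b}))"
  unfolding is_base_def
proof (intro conjI ballI)
  show "insert c (B - {b}) \<subseteq> {1..n} \<times> {0..k}" using assms(1-3) unfolding is_base_def by blast
  fix i assume i: "i \<in> {1..n}"
  have row_B: "\<exists>!j. (i, j) \<in> B" using assms(1) i unfolding is_base_def by blast
  show "\<exists>!j. (i, j) \<in> insert c (B - {b})"
  proof (cases "i = fst b")
    case True
    obtain jb jc where b: "b = (i, jb)" and c: "c = (i, jc)" using True assms(5) by (metis prod.collapse)
    have "(i, j) \<in> B \<Longrightarrow> j = jb" for j using row_B assms(4) b by blast
    then show ?thesis using assms(3,4) unfolding b c by (intro ex1I[of _ jc]) auto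
  next
    case False
    then have "(i, j) \<in> insert c (B - {b}) \<longleftrightarrow> (i, j) \<in> B" for j using assms(5) by auto
    with row_B show ?thesis by simp
  qed
qed

lemma is_base_obtains_assignment:
  assumes "is_base n k C"
  obtains s where "s \<in> assignments k {1..n}" "C = base_of {1..n} s"
proof
  define s where "s i = (if i \<in> {1..n} then THE j. (i, j) \<in> C else 0)" for i
  have row: "(i, j) \<in> C \<longleftrightarrow> j = s i" if "i \<in> {1..n}" for i j
  proof -
    have ex: "\<exists>!j. (i, j) \<in> C" using assms that unfolding is_base_def by blast
    have si: "s i = (THE j. (i, j) \<in> C)" unfolding s_def by (rule if_P[OF that])
    show ?thesis
    proof
      assume "(i, j) \<in> C"
      then show "j = s i" unfolding si by (rule the1_equality[OF ex, symmetric])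
    next
      assume "j = s i"
      then show "(i, j) \<in> C" unfolding si using theI'[OF ex] by simp
    qed
  qed
  have C: "C \<subseteq> {1..n} \<times> {0..k}" using assms unfolding is_base_def by blast
  show "s \<in> assignments k {1..n}"
    unfolding assignments_def
  proof (intro CollectI allI conjI impI)
    fix i assume "i \<in> {1..n}"
    then have "(i, s i) \<in> C" using row by simp
    with C show "s i \<le> k" by auto
  next
    fix i assume "i \<notin> {1..n}"
    then show "s i = 0" unfolding s_def by (rule if_not_P)
  qed
  show "C = base_of {1..n} s"
  proof (intro equalityI subsetI)
    fix p assume p: "p \<in> C"
    obtain i j where ij: "p = (i, j)" by (cases p)
    with p C have "i \<in> {1..n}" by auto
    with p ij row have "j = s i" by simp
    with ij \<open>i \<in> {1..n}\<close> show "p \<in> base_of {1..n} s" unfolding base_of_def by simp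
  next
    fix p assume "p \<in> base_of {1..n} s"
    then obtain i where "i \<in> {1..n}" "p = (i, s i)" unfolding base_of_def by blast
    then show "p \<in> C" using row by simp
  qed
qed

lemma mlsum_base_indicator:
  assumes "is_base n k C"
  shows "mlsum k {1..n} (\<lambda>i j. of_bool ((i, j) \<in> C)) (\<lambda>\<sigma>. g (base_of {1..n} \<sigma>)) = g C"
proof -
  obtain s where s: "s \<in> assignments k {1..n}" "C = base_of {1..n} s"
    using is_base_obtains_assignment[OF assms] .
  then show ?thesis by (subst mlsum_point_mass[of _ s]) (auto simp: base_of_def)
qed

lemma expectation_bernoulli_mix:
  fixes g :: "'a \<Rightarrow> real"
  assumes "finite A" "set_pmf p1 \<subseteq> A" "set_pmf p2 \<subseteq> A" "0 \<le> q" "q \<le> 1"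
  shows "measure_pmf.expectation (bind_pmf (bernoulli_pmf q) (\<lambda>b. if b then p1 else p2)) g
       = q * measure_pmf.expectation p1 g + (1 - q) * measure_pmf.expectation p2 g"
proof -
  let ?p = "bind_pmf (bernoulli_pmf q) (\<lambda>b. if b then p1 else p2)"
  have expectation: "measure_pmf.expectation r g = (\<Sum>a\<in>A. g a * pmf r a)" if "set_pmf r \<subseteq> A" for r
    by (rule integral_measure_pmf_real) (use assms(1) that in auto)
  have "pmf ?p a = q * pmf p1 a + (1 - q) * pmf p2 a" for a
    using assms(4,5) by (simp add: pmf_bind)
  moreover have "set_pmf ?p \<subseteq> A" using assms(2,3) by (auto split: if_splits)
  ultimately show ?thesis
    using assms(2,3) by (simp add: expectation distrib_left sum.distrib sum_distrib_left mult_ac)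
qed

definition swap_point :: "real \<Rightarrow> (nat \<times> nat) set \<Rightarrow> (real \<times> (nat \<times> nat) set) list \<Rightarrow> nat \<Rightarrow> nat \<Rightarrow> real" where
  "swap_point \<gamma> C L i j = \<gamma> * of_bool ((i, j) \<in> C) + (\<Sum>(\<beta>, B)\<leftarrow>L. \<beta> * of_bool ((i, j) \<in> B))"

definition swap_invariant :: "nat \<Rightarrow> nat \<Rightarrow> real \<Rightarrow> (nat \<times> nat) set \<Rightarrow> (real \<times> (nat \<times> nat) set) list \<Rightarrow> bool" where
  "swap_invariant n k \<gamma> C L \<longleftrightarrow> 0 < \<gamma> \<and> is_base n k C \<and> (\<forall>(\<beta>, B)\<in>set L. 0 < \<beta> \<and> is_base n k B)
     \<and> \<gamma> + sum_list (map fst L) = 1"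

lemma mlsum_swap_step:
  assumes "0 < \<gamma>" "0 < \<beta>" "c \<in> C - B" "b \<in> B - C" "fst c = i" "fst b = i" "i \<in> {1..n}"
  defines "q \<equiv> \<gamma> / (\<gamma> + \<beta>)"
  shows "q * mlsum k {1..n} (swap_point \<gamma> C ((\<beta>, insert c (B - {b})) # L)) \<phi>
      + (1 - q) * mlsum k {1..n} (swap_point \<gamma> (insert b (C - {c})) ((\<beta>, B) # L)) \<phi>
    = mlsum k {1..n} (swap_point \<gamma> C ((\<beta>, B) # L)) \<phi>"
proof -
  define v where "v a j = (of_bool ((a, j) = c) - of_bool ((a, j) = b) :: real)" for a j
  define y where "y = swap_point \<gamma> C ((\<beta>, B) # L)"
  have ind: "of_bool ((a, j) \<in> insert c (B - {b})) = of_bool ((a, j) \<in> B) + v a j"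
    "of_bool ((a, j) \<in> insert b (C - {c})) = of_bool ((a, j) \<in> C) - v a j" for a j
    using assms(3,4) by (auto simp: v_def)
  have moves: "swap_point \<gamma> C ((\<beta>, insert c (B - {b})) # L) = (\<lambda>a j. y a j + \<beta> * v a j)"
    "swap_point \<gamma> (insert b (C - {c})) ((\<beta>, B) # L) = (\<lambda>a j. y a j + (- \<gamma>) * v a j)"
    unfolding fun_eq_iff swap_point_def y_def list.map prod.case sum_list.Cons ind
    by (simp_all add: algebra_simps)
  define K where "K = (\<Sum>\<sigma>\<in>assignments k {1..n}. \<phi> \<sigma> * v i (\<sigma> i) * (\<Prod>l\<in>{1..n} - {i}. y l (\<sigma> l)))"
  have "\<And>a j. a \<noteq> i \<Longrightarrow> v a j = 0" using assms(5,6) by (auto simp: v_def)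
  then have affine: "mlsum k {1..n} (\<lambda>a j. y a j + t * v a j) \<phi> = mlsum k {1..n} y \<phi> + t * K" for t
    unfolding K_def by (rule mlsum_row_affine[OF finite_atLeastAtMost assms(7)])
  have "q * \<beta> + (1 - q) * (- \<gamma>) = 0"
    using assms(1,2) by (simp add: q_def field_simps)
  moreover have "q * (E + \<beta> * K) + (1 - q) * (E + (- \<gamma>) * K) = E + (q * \<beta> + (1 - q) * (- \<gamma>)) * K" for E
    by (simp add: algebra_simps)
  ultimately show ?thesis unfolding moves affine by (simp add: y_def)
qed

lemma swap_round_expectation:
  assumes "swap_round n \<gamma> C L p" "swap_invariant n k \<gamma> C L"
  shows "set_pmf p \<subseteq> {C. is_base n k C}
    \<and> (\<forall>g. measure_pmf.expectation p g = mlsum k {1..n} (swap_point \<gamma> C L) (\<lambda>\<sigma>. g (base_of {1..n} \<sigma>)))"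
  using assms
proof induction
  case (finish \<gamma> C)
  then have "swap_point \<gamma> C [] = (\<lambda>i j. of_bool ((i, j) \<in> C))" and "is_base n k C"
    by (auto simp: swap_point_def swap_invariant_def fun_eq_iff)
  then show ?case using mlsum_base_indicator by simp
next
  case (merged \<gamma> \<beta> C L p)
  have "swap_point (\<gamma> + \<beta>) C L = swap_point \<gamma> C ((\<beta>, C) # L)"
    by (simp add: fun_eq_iff swap_point_def algebra_simps)
  with merged show ?case by (simp add: swap_invariant_def algebra_simps)
next
  case (swap C B i c b \<gamma> \<beta> L p1 p2)
  have "0 < \<beta>" "is_base n k B" "is_base n k C" "0 < \<gamma>" using swap.prems by (auto simp: swap_invariant_def)
  moreover have "is_base n k (insert c (B - {b}))" "is_base n k (insert b (C - {c}))"
    using is_base_exchange swap.hyps(3-6) calculation(2,3) by auto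
  ultimately have "swap_invariant n k \<gamma> C ((\<beta>, insert c (B - {b})) # L)"
    and "swap_invariant n k \<gamma> (insert b (C - {c})) ((\<beta>, B) # L)"
    using swap.prems by (simp_all add: swap_invariant_def)
  then have IH1: "set_pmf p1 \<subseteq> {C. is_base n k C}"
      "\<And>g. measure_pmf.expectation p1 g = mlsum k {1..n} (swap_point \<gamma> C ((\<beta>, insert c (B - {b})) # L)) (\<lambda>\<sigma>. g (base_of {1..n} \<sigma>))"
    and IH2: "set_pmf p2 \<subseteq> {C. is_base n k C}"
      "\<And>g. measure_pmf.expectation p2 g = mlsum k {1..n} (swap_point \<gamma> (insert b (C - {c})) ((\<beta>, B) # L)) (\<lambda>\<sigma>. g (base_of {1..n} \<sigma>))"
    using swap.IH by auto
  have q: "0 \<le> \<gamma> / (\<gamma> + \<beta>)" "\<gamma> / (\<gamma> + \<beta>) \<le> 1" using \<open>0 < \<gamma>\<close> \<open>0 < \<beta>\<close> by auto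
  show ?case
  proof
    show "set_pmf (bind_pmf (bernoulli_pmf (\<gamma> / (\<gamma> + \<beta>))) (\<lambda>h. if h then p1 else p2)) \<subseteq> {C. is_base n k C}"
      using IH1(1) IH2(1) by (auto split: if_split_asm)
    show "\<forall>g. measure_pmf.expectation (bind_pmf (bernoulli_pmf (\<gamma> / (\<gamma> + \<beta>))) (\<lambda>h. if h then p1 else p2)) g
        = mlsum k {1..n} (swap_point \<gamma> C ((\<beta>, B) # L)) (\<lambda>\<sigma>. g (base_of {1..n} \<sigma>))"
      unfolding expectation_bernoulli_mix[OF finite_bases IH1(1) IH2(1) q] IH1(2) IH2(2)
      by (intro allI mlsum_swap_step[OF \<open>0 < \<gamma>\<close> \<open>0 < \<beta>\<close> swap.hyps(3-6) swap.hyps(2)])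
  qed
qed

lemma swap_round_distribution:
  assumes "is_decomposition n k x D" "swap_round n (fst (hd D)) (snd (hd D)) (tl D) p"
  shows "measure_pmf.expectation p g = mlsum k {1..n} (xbar k x) (\<lambda>\<sigma>. g (base_of {1..n} \<sigma>))"
proof -
  obtain d D' where D: "D = d # D'"
    using assms(1) unfolding is_decomposition_def by (cases D) auto
  have list_sum: "(\<Sum>l<length D. F (D ! l)) = F d + sum_list (map F D')" for F :: "real \<times> (nat \<times> nat) set \<Rightarrow> real"
    unfolding D length_Cons sum.lessThan_Suc_shift by (simp add: sum_list_sum_nth atLeast0LessThan)
  have invariant: "swap_invariant n k (fst d) (snd d) D'"
    using assms(1) list_sum[of fst] unfolding is_decomposition_def swap_invariant_def D by (auto simp: case_prod_beta)
  have point: "swap_point (fst d) (snd d) D' i j = xbar k x i j" if "i \<in> {1..n}" "j \<le> k" for i j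
  proof -
    have "swap_point (fst d) (snd d) D' i j = (\<Sum>l<length D. fst (D ! l) * (if (i, j) \<in> snd (D ! l) then 1 else 0))"
      unfolding list_sum[of "\<lambda>p. fst p * (if (i, j) \<in> snd p then 1 else 0)"] swap_point_def
      by (simp add: case_prod_beta' of_bool_def)
    then show ?thesis using assms(1) that unfolding is_decomposition_def by auto
  qed
  have "swap_round n (fst d) (snd d) D' p" using assms(2) unfolding D by simp
  then show ?thesis
    using swap_round_expectation[OF _ invariant] mlsum_cong_weights[of "{1..n}" k, OF point] by simp
qed

section \<open>Assignments as k-tuples of disjoint sets\<close>

definition tuple_of :: "nat \<Rightarrow> nat \<Rightarrow> (nat \<Rightarrow> nat) \<Rightarrow> nat \<Rightarrow> nat set" where
  "tuple_of n k \<sigma> = (\<lambda>j. if j \<in> {1..k} then {i \<in> {1..n}. \<sigma> i = j} else {})"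

definition assignment_of :: "nat \<Rightarrow> (nat \<Rightarrow> nat set) \<Rightarrow> nat \<Rightarrow> nat" where
  "assignment_of k S i = (if \<exists>j\<in>{1..k}. i \<in> S j then THE j. j \<in> {1..k} \<and> i \<in> S j else 0)"

lemma base_to_tuple_base_of: "base_to_tuple k (base_of {1..n} \<sigma>) = tuple_of n k \<sigma>"
  unfolding base_to_tuple_def base_of_def tuple_of_def by (intro ext) auto

lemma tuple_of_in_ktuples: "tuple_of n k \<sigma> \<in> ktuples n k"
  unfolding ktuples_def tuple_of_def by auto

lemma assignment_of_eq:
  assumes "S \<in> ktuples n k" "j \<in> {1..k}" "i \<in> S j"
  shows "assignment_of k S i = j"
proof -
  have "(THE j. j \<in> {1..k} \<and> i \<in> S j) = j"
    using assms unfolding ktuples_def by (intro the_equality) blast+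
  with assms(2,3) show ?thesis unfolding assignment_of_def by auto
qed

lemma assignment_of_in_assignments:
  assumes "S \<in> ktuples n k"
  shows "assignment_of k S \<in> assignments k {1..n}"
  unfolding assignments_def
proof (intro CollectI allI conjI impI)
  fix i
  show "assignment_of k S i \<le> k"
  proof (cases "\<exists>j\<in>{1..k}. i \<in> S j")
    case True
    then obtain j where "j \<in> {1..k}" "i \<in> S j" by blast
    then show ?thesis using assignment_of_eq[OF assms] by simp
  qed (simp add: assignment_of_def)
  show "assignment_of k S i = 0" if "i \<notin> {1..n}"
  proof -
    have "\<forall>j\<in>{1..k}. i \<notin> S j" using assms that unfolding ktuples_def by blast
    then show ?thesis unfolding assignment_of_def by simp
  qed
qed

lemma tuple_of_assignment_of:
  assumes "S \<in> ktuples n k"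
  shows "tuple_of n k (assignment_of k S) = S"
proof
  fix j
  have "{i \<in> {1..n}. assignment_of k S i = j} = S j" if j: "j \<in> {1..k}"
  proof (intro equalityI subsetI)
    fix i assume i: "i \<in> {i \<in> {1..n}. assignment_of k S i = j}"
    then obtain j' where "j' \<in> {1..k}" "i \<in> S j'"
      using j unfolding assignment_of_def by (auto split: if_splits)
    with i assignment_of_eq[OF assms] show "i \<in> S j" by auto
  next
    fix i assume i: "i \<in> S j"
    with assms j have "i \<in> {1..n}" unfolding ktuples_def by blast
    with i show "i \<in> {i \<in> {1..n}. assignment_of k S i = j}"
      using assignment_of_eq[OF assms j] by simp
  qed
  then show "tuple_of n k (assignment_of k S) j = S j"
    using assms unfolding tuple_of_def ktuples_def by auto
qed

lemma assignment_of_tuple_of: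
  assumes "\<sigma> \<in> assignments k {1..n}"
  shows "assignment_of k (tuple_of n k \<sigma>) = \<sigma>"
proof
  fix i
  show "assignment_of k (tuple_of n k \<sigma>) i = \<sigma> i"
  proof (cases "\<sigma> i = 0")
    case True
    then show ?thesis unfolding assignment_of_def tuple_of_def by auto
  next
    case False
    have "i \<notin> {1..n} \<Longrightarrow> \<sigma> i = 0" using assms unfolding assignments_def by auto
    moreover have "\<sigma> i \<le> k" using assms by (rule assignments_le)
    ultimately have "i \<in> {1..n}" "\<sigma> i \<in> {1..k}" using False by auto
    then show ?thesis
      by (intro assignment_of_eq[OF tuple_of_in_ktuples]) (auto simp: tuple_of_def)
  qed
qed

lemma tuple_of_fun_upd:
  assumes "\<sigma> i = 0" "i \<in> {1..n}" "j \<in> {1..k}"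
  shows "tuple_of n k (\<sigma>(i := j)) = (tuple_of n k \<sigma>)(j := insert i (tuple_of n k \<sigma> j))"
    and "i \<notin> (\<Union>l\<in>{1..k}. tuple_of n k \<sigma> l)"
  using assms unfolding tuple_of_def by (auto simp: fun_eq_iff)

text \<open>If \<open>\<tau>\<close> extends \<open>\<sigma>\<close> and leaves row \<open>i\<close> free, the meet and join of \<open>\<sigma>(i := j)\<close> and \<open>\<tau>\<close> are
  \<open>\<sigma>\<close> and \<open>\<tau>(i := j)\<close>; this turns \<open>k\<close>-submodularity into diminishing returns.\<close>

lemma kmeet_tuple_of:
  assumes "\<forall>l. \<sigma> l \<noteq> 0 \<longrightarrow> \<tau> l = \<sigma> l" "\<tau> i = 0"
  shows "kmeet (tuple_of n k (\<sigma>(i := j))) (tuple_of n k \<tau>) = tuple_of n k \<sigma>"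
proof -
  have "\<sigma> i = 0" using assms by force
  with assms show ?thesis
    unfolding kmeet_def tuple_of_def by (force simp: fun_eq_iff)
qed

lemma kjoin_tuple_of:
  assumes "\<forall>l. \<sigma> l \<noteq> 0 \<longrightarrow> \<tau> l = \<sigma> l" "\<tau> i = 0" "j \<in> {1..k}"
  shows "kjoin k (tuple_of n k (\<sigma>(i := j))) (tuple_of n k \<tau>) = tuple_of n k (\<tau>(i := j))"
proof -
  have union: "tuple_of n k (\<sigma>(i := j)) l \<union> tuple_of n k \<tau> l = tuple_of n k (\<tau>(i := j)) l" for l
    using assms unfolding tuple_of_def by force
  show ?thesis
    unfolding kjoin_def union by (auto simp: fun_eq_iff tuple_of_def)
qed

lemma tuple_of_weight:
  assumes "\<sigma> \<in> assignments k {1..n}"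
  shows "(\<Prod>j\<in>{1..k}. \<Prod>i\<in>tuple_of n k \<sigma> j. x i j)
      * (\<Prod>i\<in>{1..n} - (\<Union>j\<in>{1..k}. tuple_of n k \<sigma> j). 1 - (\<Sum>j\<in>{1..k}. x i j))
      = (\<Prod>i\<in>{1..n}. xbar k x i (\<sigma> i))"
proof -
  have chosen: "(\<Union>j\<in>{1..k}. tuple_of n k \<sigma> j) = {1..n} \<inter> - {i. \<sigma> i = 0}"
    unfolding tuple_of_def using assignments_le[OF assms] by auto
  have "(\<Prod>j\<in>{1..k}. \<Prod>i\<in>tuple_of n k \<sigma> j. x i j) = (\<Prod>j\<in>{1..k}. \<Prod>i\<in>tuple_of n k \<sigma> j. x i (\<sigma> i))"
    unfolding tuple_of_def by (intro prod.cong refl) auto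
  also have "\<dots> = (\<Prod>i\<in>{1..n} \<inter> - {i. \<sigma> i = 0}. x i (\<sigma> i))"
    unfolding chosen[symmetric] by (rule prod.UNION_disjoint[symmetric]) (auto simp: tuple_of_def)
  moreover have "{1..n} - (\<Union>j\<in>{1..k}. tuple_of n k \<sigma> j) = {1..n} \<inter> {i. \<sigma> i = 0}"
    unfolding chosen by auto
  moreover have "(\<Prod>i\<in>{1..n}. xbar k x i (\<sigma> i))
      = (\<Prod>i\<in>{1..n} \<inter> {i. \<sigma> i = 0}. 1 - (\<Sum>j\<in>{1..k}. x i j)) * (\<Prod>i\<in>{1..n} \<inter> - {i. \<sigma> i = 0}. x i (\<sigma> i))"
    unfolding xbar_def by (rule prod.If_cases) simp
  ultimately show ?thesis by (simp add: mult.commute)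
qed

lemma multilinear_ext_eq_mlsum:
  "multilinear_ext n k f x = mlsum k {1..n} (xbar k x) (\<lambda>\<sigma>. f (tuple_of n k \<sigma>))"
  unfolding multilinear_ext_def mlsum_def
proof (rule sum.reindex_bij_witness[where i = "tuple_of n k" and j = "assignment_of k"])
  fix S assume S: "S \<in> ktuples n k"
  show "tuple_of n k (assignment_of k S) = S" by (rule tuple_of_assignment_of[OF S])
  show "assignment_of k S \<in> assignments k {1..n}" by (rule assignment_of_in_assignments[OF S])
  show "f (tuple_of n k (assignment_of k S)) * (\<Prod>i\<in>{1..n}. xbar k x i (assignment_of k S i))
      = f S * (\<Prod>j\<in>{1..k}. \<Prod>i\<in>S j. x i j) * (\<Prod>i\<in>{1..n} - (\<Union>j\<in>{1..k}. S j). 1 - (\<Sum>j\<in>{1..k}. x i j))"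
    using tuple_of_weight[OF assignment_of_in_assignments[OF S], of x] by (simp add: tuple_of_assignment_of[OF S] mult.assoc)
next
  fix \<sigma> assume "\<sigma> \<in> assignments k {1..n}"
  then show "assignment_of k (tuple_of n k \<sigma>) = \<sigma>" by (rule assignment_of_tuple_of)
qed (rule tuple_of_in_ktuples)

lemma xbar_row_distribution:
  assumes "polytopeP n k x" "i \<in> {1..n}"
  shows "j \<le> k \<Longrightarrow> 0 \<le> xbar k x i j" and "(\<Sum>j\<le>k. xbar k x i j) = 1"
proof -
  have "\<And>j. j \<in> {1..k} \<Longrightarrow> 0 \<le> x i j" "(\<Sum>j\<in>{1..k}. x i j) \<le> 1"
    using assms unfolding polytopeP_def by auto
  then show "j \<le> k \<Longrightarrow> 0 \<le> xbar k x i j" unfolding xbar_def by auto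
  have "(\<Sum>j\<in>{1..k}. xbar k x i j) = (\<Sum>j\<in>{1..k}. x i j)" unfolding xbar_def by (intro sum.cong) auto
  moreover have "{..k} = insert 0 {1..k}" by auto
  ultimately show "(\<Sum>j\<le>k. xbar k x i j) = 1" by (simp add: xbar_def)
qed

lemma bounded_dr_product_tuple_of:
  assumes "polytopeP n k x" "k_submodular n k f"
    and "\<forall>S\<in>ktuples n k. \<forall>e\<in>{1..n}. \<forall>j\<in>{1..k}. e \<notin> (\<Union>l\<in>{1..k}. S l) \<longrightarrow>
           0 \<le> marginal f e j S \<and> marginal f e j S \<le> 1"
  shows "bounded_dr_product k {1..n} (xbar k x) (\<lambda>\<sigma>. f (tuple_of n k \<sigma>))"
proof
  fix \<sigma> :: "nat \<Rightarrow> nat" and i j :: nat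
  assume "\<sigma> \<in> assignments k {1..n}" "i \<in> {1..n}" "j \<in> {1..k}" "\<sigma> i = 0"
  with assms(3) tuple_of_fun_upd[of \<sigma> i n j k] tuple_of_in_ktuples[of n k \<sigma>]
  show "0 \<le> f (tuple_of n k (\<sigma>(i := j))) - f (tuple_of n k \<sigma>)
      \<and> f (tuple_of n k (\<sigma>(i := j))) - f (tuple_of n k \<sigma>) \<le> 1"
    unfolding marginal_def by simp
next
  fix \<sigma> \<tau> :: "nat \<Rightarrow> nat" and i j :: nat
  assume "\<sigma> \<in> assignments k {1..n}" "\<tau> \<in> assignments k {1..n}" "\<forall>l. \<sigma> l \<noteq> 0 \<longrightarrow> \<tau> l = \<sigma> l"
    "i \<in> {1..n}" "\<tau> i = 0" "j \<in> {1..k}"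
  moreover have "f (kmeet (tuple_of n k (\<sigma>(i := j))) (tuple_of n k \<tau>)) + f (kjoin k (tuple_of n k (\<sigma>(i := j))) (tuple_of n k \<tau>))
      \<le> f (tuple_of n k (\<sigma>(i := j))) + f (tuple_of n k \<tau>)"
    using assms(2) tuple_of_in_ktuples unfolding k_submodular_def by blast
  ultimately show "f (tuple_of n k (\<tau>(i := j))) - f (tuple_of n k \<tau>) \<le> f (tuple_of n k (\<sigma>(i := j))) - f (tuple_of n k \<sigma>)"
    by (simp add: kmeet_tuple_of kjoin_tuple_of)
qed (use xbar_row_distribution[OF assms(1)] in auto)

theorem mainTheorem9:
  fixes n k :: nat and f :: "(nat \<Rightarrow> nat set) \<Rightarrow> real" and x :: "nat \<Rightarrow> nat \<Rightarrow> real"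
    and D :: "(real \<times> (nat \<times> nat) set) list" and p :: "(nat \<times> nat) set pmf"
  assumes k: "k \<ge> 1"
    and nonneg: "\<forall>S\<in>ktuples n k. f S \<ge> 0"
    and mono: "k_monotone n k f"
    and ksub: "k_submodular n k f"
    and marg: "\<forall>S\<in>ktuples n k. \<forall>e\<in>{1..n}. \<forall>j\<in>{1..k}. e \<notin> (\<Union>l\<in>{1..k}. S l) \<longrightarrow>
                 0 \<le> marginal f e j S \<and> marginal f e j S \<le> 1"
    and xP: "polytopeP n k x"
    and dec: "is_decomposition n k x D"
    and rnd: "swap_round n (fst (hd D)) (snd (hd D)) (tl D) p"
  shows "measure_pmf.expectation p (\<lambda>C. f (base_to_tuple k C)) \<ge> multilinear_ext n k f x
    \<and> (\<forall>\<delta>>0. measure_pmf.prob p {C. f (base_to_tuple k C) \<le> (1 - \<delta>) * multilinear_ext n k f x}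
            \<le> exp (- multilinear_ext n k f x * \<delta>^2 / 8))"
proof -
  interpret bounded_dr_product k "{1..n}" "xbar k x" "\<lambda>\<sigma>. f (tuple_of n k \<sigma>)"
    using xP ksub marg by (rule bounded_dr_product_tuple_of)
  let ?\<mu> = "multilinear_ext n k f x"
  note expectation = swap_round_distribution[OF dec rnd]
  have \<mu>: "?\<mu> = mlsum k {1..n} (xbar k x) (\<lambda>\<sigma>. f (tuple_of n k \<sigma>))"
    by (rule multilinear_ext_eq_mlsum)
  have "measure_pmf.expectation p (\<lambda>C. f (base_to_tuple k C)) = ?\<mu>"
    unfolding expectation \<mu> base_to_tuple_base_of ..
  moreover have "measure_pmf.prob p {C. f (base_to_tuple k C) \<le> (1 - \<delta>) * ?\<mu>} \<le> exp (- ?\<mu> * \<delta>^2 / 8)"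
    if "\<delta> > 0" for \<delta>
  proof -
    let ?A = "{C. f (base_to_tuple k C) \<le> (1 - \<delta>) * ?\<mu>}"
    have "measure_pmf.prob p ?A = measure_pmf.expectation p (indicator ?A)" by simp
    also have "\<dots> = mlsum k {1..n} (xbar k x) (\<lambda>\<sigma>. of_bool (f (tuple_of n k \<sigma>) \<le> (1 - \<delta>) * ?\<mu>))"
      unfolding expectation indicator_def mem_Collect_eq base_to_tuple_base_of ..
    also have "\<dots> \<le> exp (- ?\<mu> * \<delta>^2 / 8)"
      unfolding \<mu> using lower_tail nonneg tuple_of_in_ktuples that by blast
    finally show ?thesis .
  qed
  ultimately show ?thesis by simp
qed

end
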